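(* In the continuous-time single-buyer game with known total value $V$, there exists a mechanism for the seller which obtains total revenue $V/e$ from every buyer type (the buyer having a dominant strategy under which it pays $V/e$).
   Context: Continuous-time single-buyer game: a single buyer has a Lipschitz-continuous value function $v:[0,1]\to[0,\infty)$ with $\int_0^1 v(t)\,dt=V$, where $V$ is known to the seller but $v$ is not. At each time the seller allocates a fraction $r(t)\in[0,1]$ of the (infinitesimal) item and the buyer pays at rate $x(t)\ge 0$; the buyer is limited-liability: $x(t)\le r(t)v(t)$ at all times. The buyer's utility is $\int_0^1(r(t)v(t)-x(t))\,dt$ and the seller's revenue is $\int_0^1 x(t)\,dt$. A dominant strategy for the buyer is one maximizing its utility. *)

theory Defs
  imports "HOL-Analysis.Analysis"
begin

text \<open>A (deterministic, adaptive) mechanism maps the buyer's payment-rate path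
  x to an allocation-rate path r = M x.\<close>

definition mechanism :: "((real \<Rightarrow> real) \<Rightarrow> real \<Rightarrow> real) \<Rightarrow> bool" where
  "mechanism M \<longleftrightarrow>
     (\<forall>x t. t \<in> {0..1} \<longrightarrow> 0 \<le> M x t \<and> M x t \<le> 1) \<and>
     (\<forall>x. M x integrable_on {0..1}) \<and>
     (\<forall>x y t. t \<in> {0..1} \<longrightarrow> (\<forall>s\<in>{0..<t}. x s = y s) \<longrightarrow> M x t = M y t)"

definition feasible :: "((real \<Rightarrow> real) \<Rightarrow> real \<Rightarrow> real) \<Rightarrow> (real \<Rightarrow> real) \<Rightarrow> (real \<Rightarrow> real) \<Rightarrow> bool" where
  "feasible M v x \<longleftrightarrow> x integrable_on {0..1} \<and>
     (\<forall>t\<in>{0..1}. 0 \<le> x t \<and> x t \<le> M x t * v t)"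

definition utility :: "((real \<Rightarrow> real) \<Rightarrow> real \<Rightarrow> real) \<Rightarrow> (real \<Rightarrow> real) \<Rightarrow> (real \<Rightarrow> real) \<Rightarrow> real" where
  "utility M v x = integral {0..1} (\<lambda>t. M x t * v t - x t)"

definition revenue :: "(real \<Rightarrow> real) \<Rightarrow> real" where
  "revenue x = integral {0..1} x"

definition dominant :: "((real \<Rightarrow> real) \<Rightarrow> real \<Rightarrow> real) \<Rightarrow> (real \<Rightarrow> real) \<Rightarrow> (real \<Rightarrow> real) \<Rightarrow> bool" where
  "dominant M v x \<longleftrightarrow> feasible M v x \<and>
     (\<forall>y. feasible M v y \<longrightarrow> utility M v y \<le> utility M v x)"

end

theory Submission
  imports Defs
begin

(* Take c = V / e and let the allocation be r = exp (P / c - 1), where P is the payment made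
   so far, capped at c.  A buyer who pays its whole allocated value, x = r v, keeps
   r t = c / integral {t..1} v until the remaining value has dropped to c; it has then paid c,
   receives everything afterwards and keeps the remaining value c.
   No strategy does better.  Since x <= r v, the potential exp (1 - F / c) - integral {t..1} v / c,
   where F is the integral of r v, is nondecreasing and vanishes at 0, so
   r t * integral {t..1} v <= c.  Splitting [0,1] where the remaining value is c / r 1, the
   allocated value is at most c ln (e r 1) = P 1 before that point and at most c after it,
   so the utility is at most c + P 1 - (total payment) <= c. *)

(* The payment before t is a Lebesgue integral in ennreal, so it is defined for every payment
   path, integrable or not, and the allocation is non-anticipating without side conditions. *)
definition capped_payment :: "real \<Rightarrow> (real \<Rightarrow> real) \<Rightarrow> real \<Rightarrow> real" where
  "capped_payment c x t =
     enn2real (min (\<integral>\<^sup>+ s. ennreal (indicator {0..<t} s * x s) \<partial>lborel) (ennreal c))"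

definition exp_mechanism :: "real \<Rightarrow> (real \<Rightarrow> real) \<Rightarrow> real \<Rightarrow> real" where
  "exp_mechanism c x t = exp (capped_payment c x t / c - 1)"

lemma capped_payment_le:
  assumes "0 \<le> c"
  shows "capped_payment c x t \<le> c"
proof -
  have "capped_payment c x t \<le> enn2real (ennreal c)"
    unfolding capped_payment_def by (rule enn2real_mono) auto
  then show ?thesis using assms by simp
qed

lemma capped_payment_mono:
  assumes "0 \<le> c" "s \<le> t"
  shows "capped_payment c x s \<le> capped_payment c x t"
proof -
  have "(\<integral>\<^sup>+ u. ennreal (indicator {0..<s} u * x u) \<partial>lborel)
      \<le> (\<integral>\<^sup>+ u. ennreal (indicator {0..<t} u * x u) \<partial>lborel)"
    using assms by (intro nn_integral_mono) (auto simp: indicator_def intro: ennreal_leI)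
  then show ?thesis
    unfolding capped_payment_def by (intro enn2real_mono min.mono) (auto simp: min_less_iff_disj)
qed

lemma capped_payment_eq_min_integral:
  assumes "0 \<le> c" and y: "y integrable_on {0..1}" "\<forall>s\<in>{0..1}. 0 \<le> y s" and t: "t \<in> {0..1}"
  shows "capped_payment c y t = min (integral {0..t} y) c"
proof -
  have "(\<integral>\<^sup>+ s. ennreal (indicator {0..<t} s * y s) \<partial>lborel)
      = (\<integral>\<^sup>+ s. ennreal (y s) * indicator {0..t} s \<partial>lborel)"
    using AE_lborel_singleton[of t]
    by (intro nn_integral_cong_AE) (auto elim!: eventually_mono simp: indicator_def)
  also have "\<dots> = ennreal (integral {0..t} y)"
    using y t by (intro nn_integral_has_integral_lebesgue' integrable_integral
        integrable_on_subinterval[OF y(1)]) auto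
  finally have "capped_payment c y t = enn2real (min (ennreal (integral {0..t} y)) (ennreal c))"
    by (simp add: capped_payment_def)
  moreover have "0 \<le> integral {0..t} y"
    using y t by (intro integral_nonneg integrable_on_subinterval[OF y(1)]) auto
  ultimately show ?thesis
    using assms(1) by (cases "integral {0..t} y \<le> c") (auto simp: min_def)
qed

lemma exp_mechanism_le_1:
  assumes "0 < c"
  shows "exp_mechanism c x t \<le> 1"
  using capped_payment_le[of c x t] assms by (simp add: exp_mechanism_def)

lemma exp_mechanism_mono:
  assumes "0 < c" "s \<le> t"
  shows "exp_mechanism c x s \<le> exp_mechanism c x t"
  using capped_payment_mono[of c s t x] assms by (simp add: exp_mechanism_def divide_right_mono)

lemma mechanism_exp_mechanism:
  assumes "0 < c"
  shows "mechanism (exp_mechanism c)"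
  unfolding mechanism_def
proof (intro conjI allI impI)
  fix x t
  show "0 \<le> exp_mechanism c x t" by (simp add: exp_mechanism_def)
  show "exp_mechanism c x t \<le> 1" using assms by (rule exp_mechanism_le_1)
  show "exp_mechanism c x integrable_on {0..1}"
    using assms by (intro integrable_on_mono_on) (auto simp: mono_on_def intro: exp_mechanism_mono)
next
  fix x y :: "real \<Rightarrow> real" and t :: real
  assume "\<forall>s\<in>{0..<t}. x s = y s"
  then have "(\<integral>\<^sup>+ s. ennreal (indicator {0..<t} s * x s) \<partial>lborel)
      = (\<integral>\<^sup>+ s. ennreal (indicator {0..<t} s * y s) \<partial>lborel)"
    by (intro nn_integral_cong) (auto simp: indicator_def)
  then show "exp_mechanism c x t = exp_mechanism c y t"
    by (simp add: exp_mechanism_def capped_payment_def)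
qed

lemma tail_integral_antimono:
  fixes v :: "real \<Rightarrow> real"
  assumes "v integrable_on {a..b}" "\<forall>u\<in>{a..b}. 0 \<le> v u" "a \<le> s" "s \<le> t"
  shows "integral {t..b} v \<le> integral {s..b} v"
  using assms by (intro integral_subset_le integrable_on_subinterval[OF assms(1)]) auto

lemma has_integral_div_tail_integral:
  fixes v :: "real \<Rightarrow> real"
  assumes v: "continuous_on {a..b} v" "\<forall>u\<in>{a..b}. 0 \<le> v u"
    and s: "s \<in> {a..b}" and pos: "0 < integral {s..b} v"
  shows "((\<lambda>t. v t / integral {t..b} v) has_integral
           (ln (integral {a..b} v) - ln (integral {s..b} v))) {a..s}"
proof -
  have "((\<lambda>t. v t / integral {t..b} v) has_integral
          (- ln (integral {s..b} v) - - ln (integral {a..b} v))) {a..s}"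
  proof (rule fundamental_theorem_of_calculus)
    show "a \<le> s" using s by simp
    fix t assume t: "t \<in> {a..s}"
    have "0 < integral {t..b} v"
      using pos tail_integral_antimono[OF integrable_continuous_interval[OF v(1)] v(2), of t s] t
      by simp
    moreover have "((\<lambda>t. integral {t..b} v) has_real_derivative - v t) (at t within {a..s})"
      using integral_has_real_derivative'[OF v(1), of t] s t
      by (auto intro: DERIV_subset)
    ultimately have "((\<lambda>t. - ln (integral {t..b} v)) has_real_derivative
                       - (inverse (integral {t..b} v) * - v t)) (at t within {a..s})"
      by (intro DERIV_minus DERIV_chain2[OF DERIV_ln]) auto
    then show "((\<lambda>t. - ln (integral {t..b} v)) has_vector_derivative v t / integral {t..b} v)
                 (at t within {a..s})"
      by (simp add: has_real_derivative_iff_has_vector_derivative divide_inverse mult.commute)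
  qed
  then show ?thesis by simp
qed

lemma mult_tail_integral_le:
  fixes v r :: "real \<Rightarrow> real"
  assumes c: "0 < c"
    and v: "continuous_on {0..1} v" "\<forall>t\<in>{0..1}. 0 \<le> v t" "integral {0..1} v = exp 1 * c"
    and r: "continuous_on {0..1} r" "\<forall>t\<in>{0..1}. 0 \<le> r t"
      "\<forall>t\<in>{0..1}. r t \<le> exp (integral {0..t} (\<lambda>s. r s * v s) / c - 1)"
    and t: "t \<in> {0..1}"
  shows "r t * integral {t..1} v \<le> c"
proof -
  define F where "F t = integral {0..t} (\<lambda>s. r s * v s)" for t
  define \<Phi> where "\<Phi> t = exp (1 - F t / c) - integral {t..1} v / c" for t
  let ?D = "\<lambda>s. v s / c * (1 - exp (1 - F s / c) * r s)"
  have D_integral: "(?D has_integral (\<Phi> t - \<Phi> 0)) {0..t}"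
  proof (rule fundamental_theorem_of_calculus)
    show "0 \<le> t" using t by simp
    fix s assume "s \<in> {0..t}"
    then have s: "s \<in> {0..1}" "{0..t} \<subseteq> {0..1}" using t by auto
    have dF: "(F has_real_derivative r s * v s) (at s within {0..t})"
      unfolding F_def using integral_has_real_derivative[OF continuous_on_mult[OF r(1) v(1)] s(1)]
      by (rule DERIV_subset) (use s in auto)
    have dT: "((\<lambda>s. integral {s..1} v) has_real_derivative - v s) (at s within {0..t})"
      using integral_has_real_derivative'[OF v(1) s(1)] by (rule DERIV_subset) (use s in auto)
    have "((\<lambda>s. exp (1 - F s / c)) has_real_derivative exp (1 - F s / c) * (0 - r s * v s / c))
        (at s within {0..t})"
      by (rule DERIV_chain2[OF DERIV_exp]) (intro DERIV_diff DERIV_const DERIV_cdivide dF)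
    then have "(\<Phi> has_real_derivative exp (1 - F s / c) * (0 - r s * v s / c) - - v s / c)
        (at s within {0..t})"
      unfolding \<Phi>_def[abs_def] by (intro DERIV_diff DERIV_cdivide dT)
    then have "(\<Phi> has_real_derivative ?D s) (at s within {0..t})"
      by (rule DERIV_cong) (simp add: algebra_simps)
    then show "(\<Phi> has_vector_derivative ?D s) (at s within {0..t})"
      by (simp add: has_real_derivative_iff_has_vector_derivative)
  qed
  have D_nonneg: "0 \<le> ?D s" if "s \<in> {0..t}" for s
  proof -
    have s: "s \<in> {0..1}" using that t by auto
    have "exp (1 - F s / c) * r s \<le> exp (1 - F s / c) * exp (F s / c - 1)"
      using r(3) s by (simp add: F_def)
    also have "\<dots> = 1" by (simp flip: exp_add)
    finally show ?thesis using v(2) s c by simp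
  qed
  have "\<Phi> 0 \<le> \<Phi> t" using has_integral_nonneg[OF D_integral D_nonneg] by simp
  moreover have "\<Phi> 0 = 0" using c by (simp add: \<Phi>_def F_def v(3))
  ultimately have tail: "integral {t..1} v \<le> c * exp (1 - F t / c)"
    using c by (simp add: \<Phi>_def field_simps)
  have "r t * integral {t..1} v \<le> r t * (c * exp (1 - F t / c))"
    using r(2) t tail by (simp add: mult_left_mono)
  also have "\<dots> \<le> exp (F t / c - 1) * (c * exp (1 - F t / c))"
    using r(3) t c by (simp add: F_def)
  also have "\<dots> = c" by (simp add: mult.left_commute flip: exp_add)
  finally show ?thesis .
qed

lemma integral_mult_le_of_mult_tail_integral_le:
  fixes v r :: "real \<Rightarrow> real"
  assumes c: "0 < c"
    and v: "continuous_on {0..1} v" "\<forall>t\<in>{0..1}. 0 \<le> v t"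
    and r: "continuous_on {0..1} r" "mono_on {0..1} r"
    and r_tail: "\<forall>t\<in>{0..1}. r t * integral {t..1} v \<le> c"
    and c_le: "c \<le> r 1 * integral {0..1} v"
  shows "integral {0..1} (\<lambda>t. r t * v t) \<le> c * (1 + ln (r 1 * integral {0..1} v / c))"
proof -
  let ?V = "integral {0..1} v" and ?T = "\<lambda>t. integral {t..1} v"
  have v_int: "v integrable_on {0..1}" using v(1) by (rule integrable_continuous_interval)
  have rv_int: "(\<lambda>t. r t * v t) integrable_on {a..b}" if "0 \<le> a" "b \<le> 1" for a b
    using that by (intro integrable_continuous_interval continuous_on_mult
        continuous_on_subset[OF r(1)] continuous_on_subset[OF v(1)]) auto
  have "0 \<le> ?V" using v(2) by (intro integral_nonneg v_int) auto
  moreover have "0 < r 1 * ?V" using c c_le by linarith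
  ultimately have r1: "0 < r 1" "0 < ?V" by (auto simp: zero_less_mult_iff)
  obtain \<sigma> where \<sigma>: "0 \<le> \<sigma>" "\<sigma> \<le> 1" "?T \<sigma> = c / r 1"
    using IVT2'[of ?T 1 "c / r 1" 0] indefinite_integral_continuous_1'[OF v_int] c r1 c_le
    by (auto simp: field_simps)
  have head: "integral {0..\<sigma>} (\<lambda>t. r t * v t) \<le> c * (ln ?V - ln (c / r 1))"
  proof -
    have "((\<lambda>t. c * (v t / ?T t)) has_integral c * (ln ?V - ln (c / r 1))) {0..\<sigma>}"
      using has_integral_div_tail_integral[OF v, of \<sigma>] \<sigma> c r1
      by (intro has_integral_mult_right) auto
    moreover have "r t * v t \<le> c * (v t / ?T t)" if t: "t \<in> {0..\<sigma>}" for t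
    proof -
      have "c / r 1 \<le> ?T t"
        using tail_integral_antimono[OF v_int v(2), of t \<sigma>] t \<sigma> by simp
      then have "0 < ?T t" using c r1 by (meson divide_pos_pos less_le_trans)
      then have "r t \<le> c / ?T t" using r_tail t \<sigma> by (simp add: pos_le_divide_eq)
      then have "r t * v t \<le> c / ?T t * v t" using v(2) t \<sigma> by (intro mult_right_mono) auto
      then show ?thesis by simp
    qed
    ultimately show ?thesis
      using \<sigma> by (intro has_integral_le[OF integrable_integral[OF rv_int]]) auto
  qed
  have tail: "integral {\<sigma>..1} (\<lambda>t. r t * v t) \<le> c"
  proof -
    have "integral {\<sigma>..1} (\<lambda>t. r t * v t) \<le> integral {\<sigma>..1} (\<lambda>t. r 1 * v t)"
      using \<sigma> v(2) mono_onD[OF r(2)]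
      by (intro integral_le rv_int integrable_on_mult_right integrable_on_subinterval[OF v_int])
        (auto intro: mult_right_mono)
    also have "\<dots> = c" using \<sigma> r1 by simp
    finally show ?thesis .
  qed
  have "integral {0..1} (\<lambda>t. r t * v t)
      = integral {0..\<sigma>} (\<lambda>t. r t * v t) + integral {\<sigma>..1} (\<lambda>t. r t * v t)"
    using \<sigma> by (intro Henstock_Kurzweil_Integration.integral_combine[symmetric] rv_int) auto
  also have "\<dots> \<le> c * (ln ?V - ln (c / r 1)) + c" using head tail by simp
  also have "\<dots> = c * (1 + ln (r 1 * ?V / c))"
    using c r1 by (simp add: ln_div ln_mult algebra_simps)
  finally show ?thesis .
qed

context
  fixes v :: "real \<Rightarrow> real" and c :: real
  assumes c_pos: "0 < c"
    and v_cont: "continuous_on {0..1} v" and v_nonneg: "\<forall>t\<in>{0..1}. 0 \<le> v t"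
    and v_total: "integral {0..1} v = exp 1 * c"
begin

lemma utility_exp_mechanism_le:
  assumes "feasible (exp_mechanism c) v y"
  shows "utility (exp_mechanism c) v y \<le> c"
proof -
  let ?r = "exp_mechanism c y" and ?Y = "\<lambda>t. integral {0..t} y"
  have y: "y integrable_on {0..1}" "\<forall>t\<in>{0..1}. 0 \<le> y t" "\<forall>t\<in>{0..1}. y t \<le> ?r t * v t"
    using assms by (auto simp: feasible_def)
  have r_eq: "?r t = exp (min (?Y t) c / c - 1)" if "t \<in> {0..1}" for t
    using capped_payment_eq_min_integral[OF _ y(1,2) that] c_pos by (simp add: exp_mechanism_def)
  have "continuous_on {0..1} (\<lambda>t. exp (min (?Y t) c / c - 1))"
    using c_pos by (intro continuous_intros indefinite_integral_continuous_1 y(1)) auto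
  then have r_cont: "continuous_on {0..1} ?r"
    by (rule continuous_on_eq) (simp add: r_eq)
  have r_mono: "mono_on {0..1} ?r"
    using c_pos by (auto intro: mono_onI exp_mechanism_mono)
  have rv_int: "(\<lambda>t. ?r t * v t) integrable_on {0..1}"
    by (intro integrable_continuous_interval continuous_on_mult r_cont v_cont)
  have r_le: "\<forall>t\<in>{0..1}. ?r t \<le> exp (integral {0..t} (\<lambda>s. ?r s * v s) / c - 1)"
  proof
    fix t :: real assume t: "t \<in> {0..1}"
    have "?Y t \<le> integral {0..t} (\<lambda>s. ?r s * v s)"
      using y t by (intro integral_le integrable_on_subinterval[OF y(1)]
          integrable_on_subinterval[OF rv_int]) auto
    then show "?r t \<le> exp (integral {0..t} (\<lambda>s. ?r s * v s) / c - 1)"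
      using r_eq[OF t] c_pos by (simp add: divide_right_mono)
  qed
  have r_tail: "\<forall>t\<in>{0..1}. ?r t * integral {t..1} v \<le> c"
    using mult_tail_integral_le[OF c_pos v_cont v_nonneg v_total r_cont _ r_le]
    by (simp add: exp_mechanism_def)
  have r_1: "?r 1 = exp (min (?Y 1) c / c - 1)" using r_eq by simp
  have "0 \<le> ?Y 1" using y by (intro integral_nonneg) auto
  then have "exp (-1) \<le> ?r 1" using r_1 c_pos by simp
  then have "c \<le> ?r 1 * integral {0..1} v"
    using c_pos by (simp add: v_total exp_minus field_simps)
  then have "integral {0..1} (\<lambda>t. ?r t * v t) \<le> c * (1 + ln (?r 1 * integral {0..1} v / c))"
    by (rule integral_mult_le_of_mult_tail_integral_le[OF c_pos v_cont v_nonneg r_cont r_mono r_tail])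
  also have "\<dots> = c + min (?Y 1) c"
    using c_pos by (simp add: v_total r_1 ln_mult field_simps)
  finally have "integral {0..1} (\<lambda>t. ?r t * v t) \<le> c + min (?Y 1) c" .
  moreover have "utility (exp_mechanism c) v y = integral {0..1} (\<lambda>t. ?r t * v t) - ?Y 1"
    unfolding utility_def by (rule integral_diff[OF rv_int y(1)])
  ultimately show ?thesis by linarith
qed

lemma exists_tail_integral_eq: "\<exists>\<tau>\<in>{0..1}. integral {\<tau>..1} v = c"
proof -
  have "continuous_on {0..1} (\<lambda>t. integral {t..1} v)"
    by (intro indefinite_integral_continuous_1' integrable_continuous_interval v_cont)
  then show ?thesis
    using IVT2'[of "\<lambda>t. integral {t..1} v" 1 c 0] c_pos v_total
    by (auto simp: mult_le_cancel_right1)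
qed

context
  fixes \<tau> :: real
  assumes \<tau>: "\<tau> \<in> {0..1}" and tail_\<tau>: "integral {\<tau>..1} v = c"
begin

definition budget_payment :: "real \<Rightarrow> real" where
  "budget_payment t = (if t \<le> \<tau> then c * v t / integral {t..1} v else 0)"

lemma c_le_tail_integral: "0 \<le> t \<Longrightarrow> t \<le> \<tau> \<Longrightarrow> c \<le> integral {t..1} v"
  using tail_integral_antimono[OF integrable_continuous_interval[OF v_cont] v_nonneg, of t \<tau>] \<tau> tail_\<tau>
  by simp

lemma has_integral_budget_payment:
  assumes t: "t \<in> {0..1}"
  shows "(budget_payment has_integral
           (if t \<le> \<tau> then c * ln (exp 1 * c / integral {t..1} v) else c)) {0..t}"
proof -
  have head: "(budget_payment has_integral c * ln (exp 1 * c / integral {s..1} v)) {0..s}"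
    if s: "0 \<le> s" "s \<le> \<tau>" for s
  proof -
    have pos: "0 < integral {s..1} v" using c_le_tail_integral[OF s] c_pos by linarith
    have "((\<lambda>u. v u / integral {u..1} v) has_integral ln (exp 1 * c / integral {s..1} v)) {0..s}"
      using has_integral_div_tail_integral[OF v_cont v_nonneg, of s] s \<tau> pos c_pos
      by (simp add: v_total ln_div)
    then have "((\<lambda>u. c * (v u / integral {u..1} v)) has_integral
                 c * ln (exp 1 * c / integral {s..1} v)) {0..s}"
      by (rule has_integral_mult_right)
    then show ?thesis
      by (rule has_integral_eq[rotated]) (use s in \<open>simp add: budget_payment_def\<close>)
  qed
  show ?thesis
  proof (cases "t \<le> \<tau>")
    case True
    then show ?thesis using head t by simp
  next
    case False
    have "(budget_payment has_integral c) {0..\<tau>}"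
      using head[of \<tau>] \<tau> tail_\<tau> c_pos by simp
    moreover have "(budget_payment has_integral 0) {\<tau>..t}"
      by (rule has_integral_spike[OF negligible_sing[of \<tau>] _ has_integral_0])
        (simp add: budget_payment_def)
    ultimately show ?thesis
      using has_integral_combine[of 0 \<tau> t budget_payment c 0] False \<tau> by simp
  qed
qed

lemma budget_payment_integrable: "budget_payment integrable_on {0..1}"
  using has_integral_budget_payment[of 1] by auto

lemma budget_payment_nonneg: "t \<in> {0..1} \<Longrightarrow> 0 \<le> budget_payment t"
  using c_le_tail_integral[of t] v_nonneg c_pos
  by (auto simp: budget_payment_def intro!: divide_nonneg_nonneg)

lemma exp_mechanism_budget_payment:
  assumes t: "t \<in> {0..1}"
  shows "exp_mechanism c budget_payment t = (if t \<le> \<tau> then c / integral {t..1} v else 1)"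
proof -
  have r: "exp_mechanism c budget_payment t = exp (min (integral {0..t} budget_payment) c / c - 1)"
    using capped_payment_eq_min_integral[OF _ budget_payment_integrable _ t] c_pos
      budget_payment_nonneg by (simp add: exp_mechanism_def)
  show ?thesis
  proof (cases "t \<le> \<tau>")
    case True
    let ?T = "integral {t..1} v"
    have T: "c \<le> ?T" "0 < ?T" using c_le_tail_integral[of t] t True c_pos by auto
    have "ln (exp 1 * c / ?T) \<le> 1" using T c_pos by (simp add: ln_div ln_mult)
    then have "min (integral {0..t} budget_payment) c = c * ln (exp 1 * c / ?T)"
      using has_integral_budget_payment[OF t] True c_pos by (auto simp: integral_unique)
    then have "exp_mechanism c budget_payment t = exp (ln (exp 1 * c / ?T) - 1)"
      using r c_pos by simp
    also have "\<dots> = c / ?T" using T c_pos by (simp add: exp_diff)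
    finally show ?thesis using True by simp
  next
    case False
    then show ?thesis using has_integral_budget_payment[OF t] c_pos by (simp add: r integral_unique)
  qed
qed

lemma feasible_budget_payment: "feasible (exp_mechanism c) v budget_payment"
  unfolding feasible_def
proof (intro conjI ballI budget_payment_integrable budget_payment_nonneg)
  fix t :: real assume "t \<in> {0..1}"
  then show "budget_payment t \<le> exp_mechanism c budget_payment t * v t"
    using v_nonneg by (simp add: exp_mechanism_budget_payment budget_payment_def)
qed

lemma utility_budget_payment: "utility (exp_mechanism c) v budget_payment = c"
proof -
  have "(v has_integral c) {\<tau>..1}"
    using tail_\<tau> \<tau> integrable_on_subinterval[OF integrable_continuous_interval[OF v_cont], of \<tau> 1]
    by (auto simp: has_integral_integral)
  then have "((\<lambda>t. if t \<le> \<tau> then 0 else v t) has_integral c) {\<tau>..1}"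
    by (rule has_integral_spike[OF negligible_sing[of \<tau>], rotated]) auto
  moreover have "((\<lambda>t. if t \<le> \<tau> then 0 else v t) has_integral 0) {0..\<tau>}"
    by (rule has_integral_eq[OF _ has_integral_0]) auto
  ultimately have "((\<lambda>t. if t \<le> \<tau> then 0 else v t) has_integral c) {0..1}"
    using has_integral_combine[of 0 \<tau> 1 _ 0 c] \<tau> by (simp add: add.commute)
  then have "((\<lambda>t. exp_mechanism c budget_payment t * v t - budget_payment t) has_integral c) {0..1}"
    by (rule has_integral_eq[rotated]) (simp add: exp_mechanism_budget_payment budget_payment_def)
  then show ?thesis unfolding utility_def by (rule integral_unique)
qed

lemma dominant_budget_payment: "dominant (exp_mechanism c) v budget_payment"
  unfolding dominant_def
  using feasible_budget_payment utility_budget_payment utility_exp_mechanism_le by simp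

lemma revenue_budget_payment: "revenue budget_payment = c"
  using has_integral_budget_payment[of 1] \<tau> tail_\<tau> c_pos
  by (cases "\<tau> = 1") (auto simp: revenue_def integral_unique)

end

lemma exists_dominant_revenue_eq: "\<exists>x. dominant (exp_mechanism c) v x \<and> revenue x = c"
proof -
  obtain \<tau> where \<tau>: "\<tau> \<in> {0..1}" "integral {\<tau>..1} v = c" using exists_tail_integral_eq by blast
  then show ?thesis using dominant_budget_payment revenue_budget_payment by blast
qed

end

lemma mechanism_zero: "mechanism (\<lambda>x t. 0)"
  by (simp add: mechanism_def integrable_0)

lemma dominant_zero_mechanism: "dominant (\<lambda>x t. 0) v (\<lambda>t. 0)"
proof -
  have "utility (\<lambda>x t. 0) v y \<le> 0" if "feasible (\<lambda>x t. 0) v y" for y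
    using that by (auto simp: utility_def feasible_def intro: integral_nonneg)
  then show ?thesis by (simp add: dominant_def feasible_def utility_def integrable_0)
qed

theorem theorem6:
  fixes V :: real
  shows "\<exists>M. mechanism M \<and>
    (\<forall>v. (\<exists>C. C-lipschitz_on {0..1} v) \<and> (\<forall>t\<in>{0..1}. 0 \<le> v t) \<and>
         integral {0..1} v = V \<longrightarrow>
         (\<exists>x. dominant M v x \<and> revenue x = V / exp 1))"
proof (cases "0 < V")
  case True
  then have "mechanism (exp_mechanism (V / exp 1))" by (simp add: mechanism_exp_mechanism)
  moreover have "\<exists>x. dominant (exp_mechanism (V / exp 1)) v x \<and> revenue x = V / exp 1"
    if "\<exists>C. C-lipschitz_on {0..1} v" "\<forall>t\<in>{0..1}. 0 \<le> v t" "integral {0..1} v = V"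
    for v :: "real \<Rightarrow> real"
    using that True by (intro exists_dominant_revenue_eq) (auto intro: lipschitz_on_continuous_on)
  ultimately show ?thesis by blast
next
  case False
  have "V = 0" if "(\<exists>C. C-lipschitz_on {0..1} v) \<and> (\<forall>t\<in>{0..1}. 0 \<le> v t) \<and> integral {0..1} v = V"
    for v :: "real \<Rightarrow> real"
  proof -
    have "v integrable_on {0..1}"
      using that by (auto intro: integrable_continuous_interval lipschitz_on_continuous_on)
    then have "0 \<le> V" using that by (auto intro: integral_nonneg)
    then show ?thesis using False by simp
  qed
  moreover have "revenue (\<lambda>t. 0) = 0" by (simp add: revenue_def)
  ultimately show ?thesis using mechanism_zero dominant_zero_mechanism by fastforce
qed

end
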